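(* Let $(K(n,m),{\bf p},{\bf q})$ be a complete bipartite framework in $\mathbb R^d$ whose configuration $({\bf p},{\bf q})$ has affine span of dimension at most $n+m-2$. If ${\bf p}$ and ${\bf q}$ are strictly separated by a quadric, then $(K(n,m),{\bf p},{\bf q})$ is not universally rigid.
   Context: A complete bipartite framework $(K(n,m),{\bf p},{\bf q})$ in $\mathbb R^d$ consists of points ${\bf p}=({\bf p}_1,\dots,{\bf p}_n)$ and ${\bf q}=({\bf q}_1,\dots,{\bf q}_m)$ in $\mathbb R^d$ (the two vertex classes), with a bar joining ${\bf p}_i$ and ${\bf q}_j$ for every $i,j$ and no other bars. A framework $(G,{\bf p})$ (graph $G$ on vertices $1,\dots,N$, points ${\bf p}_i\in\mathbb R^d$) is universally rigid if for every $D$ and every configuration ${\bf p}'$ in $\mathbb R^D$ with $|{\bf p}'_i-{\bf p}'_j|=|{\bf p}_i-{\bf p}_j|$ for all edges $\{i,j\}$ of $G$, one has $|{\bf p}'_i-{\bf p}'_j|=|{\bf p}_i-{\bf p}_j|$ for all pairs $i,j$. For ${\bf x}\in\mathbb R^d$ let $\hat{\bf x}\in\mathbb R^{d+1}$ be ${\bf x}$ with a $1$ appended as last coordinate. ${\bf p}$ and ${\bf q}$ are strictly separated by a quadric if there is a symmetric $(d+1)\times(d+1)$ real matrix $A$ with $\hat{\bf q}_j^tA\hat{\bf q}_j<0<\hat{\bf p}_i^tA\hat{\bf p}_i$ for all $i=1,\dots,n$, $j=1,\dots,m$. *)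

theory Defs
  imports "HOL-Analysis.Analysis"
begin

text \<open>Euclidean distance in R^D, points of R^D represented as functions nat => real
  (only coordinates 0..D-1 matter).\<close>
definition distD :: "nat \<Rightarrow> (nat \<Rightarrow> real) \<Rightarrow> (nat \<Rightarrow> real) \<Rightarrow> real" where
  "distD D x y = sqrt (\<Sum>k<D. (x k - y k)^2)"

definition universally_rigid ::
  "'v set \<Rightarrow> ('v \<times> 'v) set \<Rightarrow> ('v \<Rightarrow> real^'d) \<Rightarrow> bool" where
  "universally_rigid V E P \<longleftrightarrow>
     (\<forall>(D::nat) (P'::'v \<Rightarrow> nat \<Rightarrow> real).
        (\<forall>(u,v)\<in>E. distD D (P' u) (P' v) = dist (P u) (P v)) \<longrightarrow>
        (\<forall>u\<in>V. \<forall>v\<in>V. distD D (P' u) (P' v) = dist (P u) (P v)))"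

definition KV :: "nat \<Rightarrow> nat \<Rightarrow> (nat + nat) set" where
  "KV n m = Inl ` {..<n} \<union> Inr ` {..<m}"

definition KE :: "nat \<Rightarrow> nat \<Rightarrow> ((nat + nat) \<times> (nat + nat)) set" where
  "KE n m = {(Inl i, Inr j) | i j. i < n \<and> j < m}"

definition bip_config :: "(nat \<Rightarrow> 'a) \<Rightarrow> (nat \<Rightarrow> 'a) \<Rightarrow> nat + nat \<Rightarrow> 'a" where
  "bip_config p q v = (case v of Inl i \<Rightarrow> p i | Inr j \<Rightarrow> q j)"

text \<open>Homogenisation x |-> (x,1) in R^(d+1); the extra coordinate is indexed by None.\<close>
definition hat :: "real^'d \<Rightarrow> real^('d option)" where
  "hat x = (\<chi> i. case i of None \<Rightarrow> 1 | Some j \<Rightarrow> x $ j)"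

definition strictly_separated_by_quadric ::
  "nat \<Rightarrow> nat \<Rightarrow> (nat \<Rightarrow> real^'d) \<Rightarrow> (nat \<Rightarrow> real^'d) \<Rightarrow> bool" where
  "strictly_separated_by_quadric n m p q \<longleftrightarrow>
     (\<exists>A :: real^('d option)^('d option). transpose A = A \<and>
        (\<forall>i<n. hat (p i) \<bullet> (A *v hat (p i)) > 0) \<and>
        (\<forall>j<m. hat (q j) \<bullet> (A *v hat (q j)) < 0))"

end

theory Submission
  imports Defs
begin

text \<open>Write \<open>Q = quad_form A\<close> and \<open>g = quad_grad A\<close>, so that \<open>g\<close> is half the gradient
  of \<open>Q\<close> and, \<open>Q\<close> being quadratic, \<open>(x - y) \<bullet> (g x + g y) = Q x - Q y\<close> exactly.
  For small \<open>s > 0\<close> lift each \<open>p\<^sub>i\<close> to \<open>(p\<^sub>i - s g p\<^sub>i, s g p\<^sub>i, \<plusminus>h p\<^sub>i, 0)\<close> and each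
  \<open>q\<^sub>j\<close> to \<open>(q\<^sub>j + s g q\<^sub>j, s g q\<^sub>j, 0, \<plusminus>h q\<^sub>j)\<close>, where \<open>h = sqrt (2s(\<bar>Q\<bar> - s\<bar>g\<bar>\<^sup>2))\<close>.
  Because \<open>Q > 0\<close> at the \<open>p\<^sub>i\<close> and \<open>Q < 0\<close> at the \<open>q\<^sub>j\<close>, expanding a squared bar length
  with the identity above makes every term involving \<open>s\<close> cancel, whatever the signs.
  The hypothesis on the affine span only serves to exclude \<open>n = m = 1\<close>, so one class has
  two vertices; flipping the sign of the height of one of them changes their distance, so
  two frameworks equivalent to the given one are not congruent to each other.\<close>

lemma euclidean_coords_isometry:
  obtains f :: "'a::euclidean_space \<Rightarrow> nat \<Rightarrow> real"
  where "\<And>x y. distD DIM('a) (f x) (f y) = dist x y"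
proof -
  obtain e :: "nat \<Rightarrow> 'a" where e: "bij_betw e {..<DIM('a)} Basis"
    using ex_bij_betw_nat_finite[of "Basis :: 'a set"] by (auto simp: atLeast0LessThan)
  have "distD DIM('a) (\<lambda>k. x \<bullet> e k) (\<lambda>k. y \<bullet> e k) = dist x y" for x y
  proof -
    have "distD DIM('a) (\<lambda>k. x \<bullet> e k) (\<lambda>k. y \<bullet> e k)
        = sqrt (\<Sum>k<DIM('a). (dist (x \<bullet> e k) (y \<bullet> e k))\<^sup>2)"
      by (simp add: distD_def dist_real_def)
    also have "\<dots> = L2_set (\<lambda>b. dist (x \<bullet> b) (y \<bullet> b)) Basis"
      unfolding L2_set_def
      using sum.reindex_bij_betw[OF e, of "\<lambda>b. (dist (x \<bullet> b) (y \<bullet> b))\<^sup>2"] by (rule arg_cong)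
    finally show ?thesis
      by (simp only: euclidean_dist_l2[of x y])
  qed
  then show thesis by (rule that)
qed

lemma universally_rigid_congruent:
  fixes P :: "'v \<Rightarrow> real^'d" and P' :: "'v \<Rightarrow> 'a::euclidean_space"
  assumes "universally_rigid V E P"
    and "\<And>u w. (u, w) \<in> E \<Longrightarrow> dist (P' u) (P' w) = dist (P u) (P w)"
    and "u \<in> V" "w \<in> V"
  shows "dist (P' u) (P' w) = dist (P u) (P w)"
proof -
  obtain f :: "'a \<Rightarrow> nat \<Rightarrow> real" where f: "\<And>x y. distD DIM('a) (f x) (f y) = dist x y"
    using euclidean_coords_isometry[where 'a = 'a] by blast
  have "\<forall>(u, w)\<in>E. distD DIM('a) ((f \<circ> P') u) ((f \<circ> P') w) = dist (P u) (P w)"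
    using assms(2) by (auto simp: f)
  then have "\<forall>u\<in>V. \<forall>w\<in>V. distD DIM('a) ((f \<circ> P') u) ((f \<circ> P') w) = dist (P u) (P w)"
    using assms(1) unfolding universally_rigid_def by blast
  with assms(3,4) show ?thesis
    by (simp add: f)
qed

lemma sum_UNIV_option:
  "(\<Sum>i\<in>(UNIV::'a::finite option set). g i) = g None + (\<Sum>j\<in>UNIV. g (Some j))"
proof -
  have "(\<Sum>i\<in>(UNIV::'a option set). g i) = (\<Sum>i\<in>insert None (range Some). g i)"
    by (simp add: UNIV_option_conv)
  also have "\<dots> = g None + (\<Sum>i\<in>range Some. g i)"
    by (subst sum.insert) auto
  also have "(\<Sum>i\<in>range Some. g i) = (\<Sum>j\<in>UNIV. g (Some j))"
    by (subst sum.reindex) (auto simp: inj_def)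
  finally show ?thesis .
qed

lemma inner_matrix_vector_symmetric:
  fixes x y :: "real^'n"
  assumes "transpose A = A"
  shows "x \<bullet> (A *v y) = y \<bullet> (A *v x)"
  by (metis assms dot_lmul_matrix inner_commute vector_transpose_matrix)

definition quad_form :: "real^('d option)^('d option) \<Rightarrow> real^'d \<Rightarrow> real" where
  "quad_form A x = hat x \<bullet> (A *v hat x)"

definition quad_grad :: "real^('d option)^('d option) \<Rightarrow> real^'d \<Rightarrow> real^'d" where
  "quad_grad A x = (\<chi> j. (A *v hat x) $ Some j)"

lemma quad_form_diff:
  assumes "transpose A = A"
  shows "(x - y) \<bullet> (quad_grad A x + quad_grad A y) = quad_form A x - quad_form A y"
proof -
  let ?w = "A *v (hat x + hat y)"
  have "(hat x - hat y) \<bullet> ?w = (x - y) \<bullet> (quad_grad A x + quad_grad A y)"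
    unfolding inner_vec_def sum_UNIV_option
    by (simp add: hat_def quad_grad_def matrix_vector_right_distrib)
  moreover have "(hat x - hat y) \<bullet> ?w = quad_form A x - quad_form A y"
    using inner_matrix_vector_symmetric[OF assms, of "hat x" "hat y"]
    by (simp add: quad_form_def matrix_vector_right_distrib inner_diff_left inner_add_right)
  ultimately show ?thesis by simp
qed

lemma norm_shifted_diff_sq:
  fixes x y u v :: "'a::real_inner"
  shows "(norm ((x - s *\<^sub>R u) - (y + s *\<^sub>R v)))\<^sup>2 + (norm (s *\<^sub>R u - s *\<^sub>R v))\<^sup>2
       = (norm (x - y))\<^sup>2 - 2 * s * ((x - y) \<bullet> (u + v)) + 2 * s\<^sup>2 * ((norm u)\<^sup>2 + (norm v)\<^sup>2)"
proof -
  have norm_diff_scaleR_sq: "(norm (a - s *\<^sub>R w))\<^sup>2 = (norm a)\<^sup>2 - 2 * s * (a \<bullet> w) + s\<^sup>2 * (norm w)\<^sup>2"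
    for a w :: 'a
    unfolding power2_norm_eq_inner
    by (simp add: inner_diff_left inner_diff_right inner_commute[of w a] power2_eq_square
        right_diff_distrib)
  have parallelogram: "(norm (u + v))\<^sup>2 + (norm (u - v))\<^sup>2 = 2 * ((norm u)\<^sup>2 + (norm v)\<^sup>2)"
    unfolding power2_norm_eq_inner
    by (simp add: inner_diff_left inner_diff_right inner_add_left inner_add_right inner_commute[of v u])
  have shift: "(x - s *\<^sub>R u) - (y + s *\<^sub>R v) = (x - y) - s *\<^sub>R (u + v)"
    and scale: "s *\<^sub>R u - s *\<^sub>R v = s *\<^sub>R (u - v)"
    by (simp_all add: algebra_simps)
  have "(norm ((x - s *\<^sub>R u) - (y + s *\<^sub>R v)))\<^sup>2 + (norm (s *\<^sub>R u - s *\<^sub>R v))\<^sup>2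
      = (norm (x - y))\<^sup>2 - 2 * s * ((x - y) \<bullet> (u + v))
        + s\<^sup>2 * ((norm (u + v))\<^sup>2 + (norm (u - v))\<^sup>2)"
    unfolding shift scale norm_diff_scaleR_sq by (simp add: power_mult_distrib distrib_left)
  then show ?thesis
    by (simp add: parallelogram)
qed

lemma dist_Pair_Pair_sq: "(dist (a, b) (c, d))\<^sup>2 = (dist a c)\<^sup>2 + (dist b d)\<^sup>2"
  by (simp add: dist_Pair_Pair)

lemma dist_Pair_less_right:
  "dist b b' < dist b'' b' \<Longrightarrow> dist (a, b) (a', b') < dist (a, b'') (a', b')"
  by (simp add: dist_Pair_Pair power_strict_mono)

definition lift_height :: "real^('d option)^('d option) \<Rightarrow> real \<Rightarrow> real^'d \<Rightarrow> real" where
  "lift_height A s x = sqrt (2 * s * (\<bar>quad_form A x\<bar> - s * (norm (quad_grad A x))\<^sup>2))"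

definition lift_pos ::
  "real^('d option)^('d option) \<Rightarrow> real \<Rightarrow> real \<Rightarrow> real^'d \<Rightarrow> ((real^'d) \<times> (real^'d)) \<times> real \<times> real"
  where "lift_pos A s c x =
    ((x - s *\<^sub>R quad_grad A x, s *\<^sub>R quad_grad A x), (c * lift_height A s x, 0))"

definition lift_neg ::
  "real^('d option)^('d option) \<Rightarrow> real \<Rightarrow> real \<Rightarrow> real^'d \<Rightarrow> ((real^'d) \<times> (real^'d)) \<times> real \<times> real"
  where "lift_neg A s c y =
    ((y + s *\<^sub>R quad_grad A y, s *\<^sub>R quad_grad A y), (0, c * lift_height A s y))"

lemma lift_height_sq:
  assumes "0 \<le> s" "s * (norm (quad_grad A x))\<^sup>2 \<le> \<bar>quad_form A x\<bar>"
  shows "(lift_height A s x)\<^sup>2 = 2 * s * (\<bar>quad_form A x\<bar> - s * (norm (quad_grad A x))\<^sup>2)"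
  unfolding lift_height_def using assms by simp

lemma lift_height_pos:
  assumes "0 < s" "s * (norm (quad_grad A x))\<^sup>2 < \<bar>quad_form A x\<bar>"
  shows "0 < lift_height A s x"
  unfolding lift_height_def using assms by simp

lemma dist_lift_pos_neg:
  assumes "transpose A = A" "0 \<le> s"
    and x: "s * (norm (quad_grad A x))\<^sup>2 \<le> quad_form A x"
    and y: "s * (norm (quad_grad A y))\<^sup>2 \<le> - quad_form A y"
    and "c \<in> {-1, 1}" "c' \<in> {-1, 1}"
  shows "dist (lift_pos A s c x) (lift_neg A s c' y) = dist x y"
proof -
  have "0 \<le> s * (norm (quad_grad A z))\<^sup>2" for z
    using \<open>0 \<le> s\<close> by simp
  then have "\<bar>quad_form A x\<bar> = quad_form A x" "\<bar>quad_form A y\<bar> = - quad_form A y"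
    using x y by (smt (verit))+
  then have hx: "(c * lift_height A s x)\<^sup>2 = 2 * s * (quad_form A x - s * (norm (quad_grad A x))\<^sup>2)"
    and hy: "(c' * lift_height A s y)\<^sup>2 = 2 * s * (- quad_form A y - s * (norm (quad_grad A y))\<^sup>2)"
    using assms lift_height_sq[of s A x] lift_height_sq[of s A y] by auto
  have "(dist (lift_pos A s c x) (lift_neg A s c' y))\<^sup>2 =
      (dist (x - s *\<^sub>R quad_grad A x) (y + s *\<^sub>R quad_grad A y))\<^sup>2
      + (dist (s *\<^sub>R quad_grad A x) (s *\<^sub>R quad_grad A y))\<^sup>2
      + (c * lift_height A s x)\<^sup>2 + (c' * lift_height A s y)\<^sup>2"
    by (simp add: lift_pos_def lift_neg_def dist_Pair_Pair_sq dist_real_def)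
  also have "\<dots> = (dist x y)\<^sup>2"
    unfolding hx hy dist_norm norm_shifted_diff_sq quad_form_diff[OF assms(1)]
    by (simp add: algebra_simps power2_eq_square)
  finally show ?thesis
    by (rule power2_eq_imp_eq) simp_all
qed

lemma dist_lift_pos_flip:
  assumes "0 < lift_height A s x" "0 < lift_height A s x'"
  shows "dist (lift_pos A s 1 x) (lift_pos A s 1 x') < dist (lift_pos A s (-1) x) (lift_pos A s 1 x')"
  unfolding lift_pos_def using assms
  by (intro dist_Pair_less_right) (simp add: dist_Pair_Pair dist_real_def)

lemma dist_lift_neg_flip:
  assumes "0 < lift_height A s y" "0 < lift_height A s y'"
  shows "dist (lift_neg A s 1 y) (lift_neg A s 1 y') < dist (lift_neg A s (-1) y) (lift_neg A s 1 y')"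
  unfolding lift_neg_def using assms
  by (intro dist_Pair_less_right) (simp add: dist_Pair_Pair dist_real_def)

definition lifted_config ::
  "real^('d option)^('d option) \<Rightarrow> real \<Rightarrow> (nat + nat \<Rightarrow> real) \<Rightarrow> (nat \<Rightarrow> real^'d) \<Rightarrow>
    (nat \<Rightarrow> real^'d) \<Rightarrow> nat + nat \<Rightarrow> ((real^'d) \<times> (real^'d)) \<times> real \<times> real"
  where "lifted_config A s \<sigma> p q v =
    (case v of Inl i \<Rightarrow> lift_pos A s (\<sigma> v) (p i) | Inr j \<Rightarrow> lift_neg A s (\<sigma> v) (q j))"

lemma lifted_config_bar_length:
  assumes "transpose A = A" "0 \<le> s"
    and "\<forall>i<n. 0 < quad_form A (p i)" "\<forall>j<m. quad_form A (q j) < 0"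
    and "\<And>v. v \<in> KV n m \<Longrightarrow>
      s * (norm (quad_grad A (bip_config p q v)))\<^sup>2 \<le> \<bar>quad_form A (bip_config p q v)\<bar>"
    and "range \<sigma> \<subseteq> {-1, 1}" "(u, w) \<in> KE n m"
  shows "dist (lifted_config A s \<sigma> p q u) (lifted_config A s \<sigma> p q w)
    = dist (bip_config p q u) (bip_config p q w)"
proof -
  obtain i j where ij: "u = Inl i" "w = Inr j" "i < n" "j < m"
    using \<open>(u, w) \<in> KE n m\<close> by (auto simp: KE_def)
  then have "s * (norm (quad_grad A (p i)))\<^sup>2 \<le> quad_form A (p i)"
    and "s * (norm (quad_grad A (q j)))\<^sup>2 \<le> - quad_form A (q j)"
    using assms(3,4) assms(5)[of u] assms(5)[of w] by (auto simp: KV_def bip_config_def)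
  with ij assms(1,2,6) show ?thesis
    by (auto simp: lifted_config_def bip_config_def intro!: dist_lift_pos_neg)
qed

lemma lifted_config_flip:
  assumes "n \<ge> 2 \<or> m \<ge> 2"
    and "\<And>v. v \<in> KV n m \<Longrightarrow> 0 < lift_height A s (bip_config p q v)"
  shows "\<exists>u\<in>KV n m. \<exists>w\<in>KV n m.
    dist (lifted_config A s (\<lambda>_. 1) p q u) (lifted_config A s (\<lambda>_. 1) p q w)
      < dist (lifted_config A s ((\<lambda>_. 1)(u := -1)) p q u) (lifted_config A s ((\<lambda>_. 1)(u := -1)) p q w)"
proof (cases "n \<ge> 2")
  case True
  then have "Inl 0 \<in> KV n m" "Inl 1 \<in> KV n m"
    by (auto simp: KV_def)
  with assms(2)[of "Inl 0"] assms(2)[of "Inl 1"] show ?thesis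
    by (intro bexI[of _ "Inl 0"] bexI[of _ "Inl 1"])
      (auto simp: lifted_config_def bip_config_def intro!: dist_lift_pos_flip)
next
  case False
  then have "Inr 0 \<in> KV n m" "Inr 1 \<in> KV n m"
    using assms(1) by (auto simp: KV_def)
  with assms(2)[of "Inr 0"] assms(2)[of "Inr 1"] show ?thesis
    by (intro bexI[of _ "Inr 0"] bexI[of _ "Inr 1"])
      (auto simp: lifted_config_def bip_config_def intro!: dist_lift_neg_flip)
qed

lemma exists_small_scale:
  fixes c w :: "'i \<Rightarrow> real"
  assumes "finite I" "\<And>i. i \<in> I \<Longrightarrow> 0 < c i"
  shows "\<exists>s>0. \<forall>i\<in>I. s * w i < c i"
proof -
  have "\<forall>\<^sub>F s in at_right 0. 0 < s \<and> (\<forall>i\<in>I. s * w i < c i)"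
  proof (intro eventually_conj eventually_at_right_less eventually_ball_finite ballI assms(1))
    fix i assume "i \<in> I"
    have "((\<lambda>s. s * w i) \<longlongrightarrow> 0 * w i) (at_right 0)"
      by (intro tendsto_intros)
    then show "\<forall>\<^sub>F s in at_right 0. s * w i < c i"
      using order_tendstoD(2) assms(2)[OF \<open>i \<in> I\<close>] by auto
  qed
  then show ?thesis
    using eventually_happens'[OF trivial_limit_at_right_real] by blast
qed

lemma two_vertices_in_one_class:
  assumes "n \<ge> 1" "m \<ge> 1" "aff_dim (p ` {..<n} \<union> q ` {..<m}) \<le> int n + int m - 2" "p 0 \<noteq> q 0"
  shows "n \<ge> 2 \<or> m \<ge> 2"
proof (rule ccontr)
  assume "\<not> (n \<ge> 2 \<or> m \<ge> 2)"
  then have "n = 1" "m = 1"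
    using assms(1,2) by auto
  then have "aff_dim {p 0, q 0} \<le> 0"
    using assms(3) by (simp add: lessThan_Suc insert_commute del: aff_dim_2)
  with assms(4) show False
    by simp
qed

lemma not_universally_rigid_by_lifting:
  assumes "transpose A = A" "0 < s"
    and pos: "\<forall>i<n. 0 < quad_form A (p i)" and neg: "\<forall>j<m. quad_form A (q j) < 0"
    and small: "\<And>v. v \<in> KV n m \<Longrightarrow>
      s * (norm (quad_grad A (bip_config p q v)))\<^sup>2 < \<bar>quad_form A (bip_config p q v)\<bar>"
    and "n \<ge> 2 \<or> m \<ge> 2"
  shows "\<not> universally_rigid (KV n m) (KE n m) (bip_config p q)"
proof
  assume rigid: "universally_rigid (KV n m) (KE n m) (bip_config p q)"
  have congruent: "dist (lifted_config A s \<sigma> p q u) (lifted_config A s \<sigma> p q w)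
      = dist (bip_config p q u) (bip_config p q w)"
    if "range \<sigma> \<subseteq> {-1, 1}" "u \<in> KV n m" "w \<in> KV n m" for \<sigma> u w
    using rigid _ that(2,3)
  proof (rule universally_rigid_congruent)
    show "dist (lifted_config A s \<sigma> p q x) (lifted_config A s \<sigma> p q y)
        = dist (bip_config p q x) (bip_config p q y)" if "(x, y) \<in> KE n m" for x y
      using lifted_config_bar_length[OF assms(1) _ pos neg _ \<open>range \<sigma> \<subseteq> {-1, 1}\<close> that]
        small \<open>0 < s\<close> by (simp add: less_imp_le)
  qed
  have "\<exists>u\<in>KV n m. \<exists>w\<in>KV n m.
    dist (lifted_config A s (\<lambda>_. 1) p q u) (lifted_config A s (\<lambda>_. 1) p q w)
      < dist (lifted_config A s ((\<lambda>_. 1)(u := -1)) p q u) (lifted_config A s ((\<lambda>_. 1)(u := -1)) p q w)"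
    using assms(6) small \<open>0 < s\<close> by (intro lifted_config_flip) (simp_all add: lift_height_pos)
  then show False
    by (auto simp: congruent image_subset_iff)
qed

theorem mainTheorem1:
  fixes n m :: nat and p q :: "nat \<Rightarrow> real^'d"
  assumes "n \<ge> 1" and "m \<ge> 1"
    and "aff_dim (p ` {..<n} \<union> q ` {..<m}) \<le> int n + int m - 2"
    and "strictly_separated_by_quadric n m p q"
  shows "\<not> universally_rigid (KV n m) (KE n m) (bip_config p q)"
proof -
  obtain A where sym: "transpose A = A"
    and pos: "\<forall>i<n. 0 < quad_form A (p i)" and neg: "\<forall>j<m. quad_form A (q j) < 0"
    using assms(4) by (auto simp: strictly_separated_by_quadric_def quad_form_def)
  have "p 0 \<noteq> q 0"
    using pos neg assms(1,2) by force
  then have two: "n \<ge> 2 \<or> m \<ge> 2"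
    using two_vertices_in_one_class assms(1-3) by blast
  have "\<exists>s>0. \<forall>v\<in>KV n m.
      s * (norm (quad_grad A (bip_config p q v)))\<^sup>2 < \<bar>quad_form A (bip_config p q v)\<bar>"
    using pos neg by (intro exists_small_scale) (auto simp: KV_def bip_config_def)
  then show ?thesis
    using not_universally_rigid_by_lifting[OF sym _ pos neg _ two] by blast
qed

end
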